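(* Let $n,q$ be positive integers, $\sigma>0$, $s>0$, $\mu=s^2/\sigma^2$, and let $h(\mathbf X\mid\hat{\mathbf W})$ be the average differential entropy of the Gaussian mixture described in the context. Then $$h(\mathbf X\mid\hat{\mathbf W})=\frac n2\ln 2\pi\sigma^2-\Big(\frac\mu q\Big)^{n/2}(2\pi)^{-qn/2}\,\frac1q\sum_{j=1}^q\int_{(\mathbb R^n)^q}d\mathbf z_1\cdots d\mathbf z_q\;e^{-\frac12\sum_a\|\mathbf z_a\|^2+\frac1{2q}\|\sum_a\mathbf z_a\|^2-\frac\mu2\|\mathbf z_j\|^2}\,\ln\frac1q\sum_{k=1}^q e^{-\frac\mu2\|\mathbf z_k\|^2}.$$
   Context: $\mathbf W_1,\dots,\mathbf W_q$ are i.i.d. Gaussian random vectors in $\mathbb R^n$ with mean $0$ and covariance $s^2\mathbf 1_n$; given $\hat{\mathbf W}=\hat{\mathbf w}=(\mathbf w_1,\dots,\mathbf w_q)$, $\mathbf X\in\mathbb R^n$ has density $f(\mathbf x\mid\hat{\mathbf w})=(2\pi\sigma^2)^{-n/2}\frac1q\sum_{j=1}^q\exp\{-\|\mathbf x-\mathbf w_j\|^2/(2\sigma^2)\}$. $h(\mathbf X\mid\hat{\mathbf W})=-\int f_{\hat{\mathbf W}}(\hat{\mathbf w})\int f(\mathbf x\mid\hat{\mathbf w})\ln f(\mathbf x\mid\hat{\mathbf w})\,d\mathbf x\,d\hat{\mathbf w}$ (natural log), the average over $\hat{\mathbf w}$ of the differential entropy of the mixture. All sums over $a$ run from $1$ to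 $q$. *)

theory Defs
  imports "HOL-Analysis.Analysis" "HOL-Probability.Probability"
begin

text \<open>Here \<open>n = CARD('n)\<close>, \<open>q = CARD('q)\<close>.\<close>
definition W_density :: "real \<Rightarrow> real^'n::finite^'q::finite \<Rightarrow> real" where
  "W_density s w = (\<Prod>j\<in>UNIV. \<Prod>i\<in>UNIV. normal_density 0 s (w $ j $ i))"

definition mix_density :: "real \<Rightarrow> real^'n::finite \<Rightarrow> real^'n^'q::finite \<Rightarrow> real" where
  "mix_density \<sigma> x w =
     (2 * pi * \<sigma>\<^sup>2) powr (- real CARD('n) / 2) * (1 / real CARD('q)) *
     (\<Sum>j\<in>UNIV. exp (- (norm (x - (w $ j)))\<^sup>2 / (2 * \<sigma>\<^sup>2)))"

end

theory Submission
  imports Defs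
begin

(*
  The mixture is (1/q) sum_j g_sigma(x - w_j), g_sigma the isotropic Gaussian density, so its
  logarithm is -(n/2) ln(2 pi sigma^2) - S(x, w) with the nonnegative surprisal
  S(x, w) = -ln((1/q) sum_k exp(-|x - w_k|^2 / (2 sigma^2))).  As the mixture integrates to 1, the
  averaged entropy is (n/2) ln(2 pi sigma^2) plus (1/q) sum_j of the double integrals of
  g_s(w) g_sigma(x - w_j) S(x, w).  In each of them substitute w_a = x - s z_a (Jacobian s^(qn)):
  S becomes -ln((1/q) sum_k exp(-mu |z_k|^2 / 2)), and completing the square,
    sum_a |x - s z_a|^2 = q |x - (s/q) sum_a z_a|^2 + s^2 (sum_a |z_a|^2 - |sum_a z_a|^2 / q),
  makes the x-integral Gaussian; what remains is the weight in z of the statement.  All integrands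
  are nonnegative, so Tonelli justifies the interchanges, and S(x, w) <= ln q + |x - w_j|^2 / (2 sigma^2)
  keeps everything finite.
*)

definition gauss_density :: "real \<Rightarrow> 'a::euclidean_space \<Rightarrow> real" where
  "gauss_density \<sigma> x = (2 * pi * \<sigma>\<^sup>2) powr (- real DIM('a) / 2) * exp (- (norm x)\<^sup>2 / (2 * \<sigma>\<^sup>2))"

lemma gauss_density_nonneg: "0 \<le> gauss_density \<sigma> x"
  by (simp add: gauss_density_def)

lemma continuous_on_gauss_density [continuous_intros]:
  "continuous_on S f \<Longrightarrow> continuous_on S (\<lambda>x. gauss_density \<sigma> (f x))"
  unfolding gauss_density_def divide_inverse by (intro continuous_intros)

lemma borel_measurable_gauss_density [measurable]: "gauss_density \<sigma> \<in> borel_measurable borel"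
  by (intro borel_measurable_continuous_onI continuous_intros)

lemma gauss_density_real: "\<sigma> > 0 \<Longrightarrow> gauss_density \<sigma> (t::real) = normal_density 0 \<sigma> t"
  by (simp add: gauss_density_def normal_density_def powr_minus_divide powr_half_sqrt[symmetric])

lemma gauss_density_eq_prod_Basis:
  assumes "\<sigma> > 0"
  shows "gauss_density \<sigma> (x::'a::euclidean_space) = (\<Prod>b\<in>Basis. gauss_density \<sigma> (x \<bullet> b))"
proof -
  have "(norm x)\<^sup>2 = (\<Sum>b\<in>Basis. (x \<bullet> b)\<^sup>2)"
    unfolding power2_norm_eq_inner by (subst euclidean_inner) (simp add: power2_eq_square)
  then have "exp (- (norm x)\<^sup>2 / (2 * \<sigma>\<^sup>2)) = (\<Prod>b\<in>Basis. exp (- (x \<bullet> b)\<^sup>2 / (2 * \<sigma>\<^sup>2)))"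
    by (simp add: exp_sum[symmetric] sum_negf sum_divide_distrib)
  then show ?thesis
    using assms by (simp add: gauss_density_def prod.distrib powr_power)
qed

lemma power2_norm_vec: "(norm (w::'a::real_normed_vector^'q::finite))\<^sup>2 = (\<Sum>j\<in>UNIV. (norm (w $ j))\<^sup>2)"
  unfolding norm_vec_def L2_set_def by (simp add: sum_nonneg)

lemma gauss_density_vec:
  assumes "\<sigma> > 0"
  shows "gauss_density \<sigma> (w::'a::euclidean_space^'q::finite) = (\<Prod>j\<in>UNIV. gauss_density \<sigma> (w $ j))"
proof -
  have "exp (- (norm w)\<^sup>2 / (2 * \<sigma>\<^sup>2)) = (\<Prod>j\<in>UNIV. exp (- (norm (w $ j))\<^sup>2 / (2 * \<sigma>\<^sup>2)))"
    by (simp add: power2_norm_vec exp_sum[symmetric] sum_negf sum_divide_distrib)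
  then show ?thesis
    using assms by (simp add: gauss_density_def prod.distrib powr_power mult.commute)
qed

lemma W_density_eq_gauss_density: "s > 0 \<Longrightarrow> W_density s w = gauss_density s w"
  by (simp add: W_density_def gauss_density_vec[of s w] gauss_density_vec[of s "w $ _"]
      gauss_density_real)

lemma nn_integral_gauss_density:
  assumes "\<sigma> > 0"
  shows "(\<integral>\<^sup>+x. gauss_density \<sigma> ((x::'a::euclidean_space) - c) \<partial>lborel) = 1"
proof -
  have "(\<integral>\<^sup>+x. gauss_density \<sigma> (x - c) \<partial>lborel)
      = (\<integral>\<^sup>+x. gauss_density \<sigma> (x - c) \<partial>distr lborel borel ((+) c))"
    by (simp add: lborel_distr_plus)
  also have "\<dots> = (\<integral>\<^sup>+x. (\<Prod>b\<in>Basis. ennreal (normal_density 0 \<sigma> ((x::'a) \<bullet> b))) \<partial>lborel)"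
    using assms by (simp add: nn_integral_distr gauss_density_eq_prod_Basis[of \<sigma> "_::'a"]
        gauss_density_real prod_ennreal)
  also have "\<dots> = 1"
    using assms by (subst nn_integral_lborel_prod) (auto simp: nn_integral_eq_integral)
  finally show ?thesis .
qed

lemma has_bochner_integral_gauss_density:
  "\<sigma> > 0 \<Longrightarrow> has_bochner_integral lborel (\<lambda>x. gauss_density \<sigma> ((x::'a::euclidean_space) - c)) 1"
  by (rule has_bochner_integral_nn_integral) (auto simp: nn_integral_gauss_density gauss_density_nonneg)

lemma nn_integral_lborel_affine:
  fixes t :: "'a::euclidean_space"
  assumes [measurable]: "f \<in> borel_measurable borel" and c: "c \<noteq> 0"
  shows "(\<integral>\<^sup>+x. f x \<partial>lborel) = (\<integral>\<^sup>+x. ennreal (\<bar>c\<bar> ^ DIM('a)) * f (t + c *\<^sub>R x) \<partial>lborel)"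
  by (subst lborel_affine[OF c, of t]) (simp add: nn_integral_density nn_integral_distr)

lemma gauss_density_mult_norm_sq_le:
  assumes "\<sigma> > 0"
  shows "gauss_density \<sigma> (y::'a::euclidean_space) * ((norm y)\<^sup>2 / (2 * \<sigma>\<^sup>2))
    \<le> 2 * 2 powr (real DIM('a) / 2) * gauss_density (sqrt 2 * \<sigma>) y"
proof -
  define u where "u = (norm y)\<^sup>2 / (4 * \<sigma>\<^sup>2)"
  have "2 powr (real DIM('a) / 2) * (2 * (2 * pi * \<sigma>\<^sup>2)) powr (- real DIM('a) / 2)
      = (2 * pi * \<sigma>\<^sup>2) powr (- real DIM('a) / 2)"
    using powr_mult[of 2 "2 * pi * \<sigma>\<^sup>2" "- real DIM('a) / 2"]
    by (simp only: mult.assoc[symmetric] powr_add[symmetric]) simp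
  moreover have "exp (- (norm y)\<^sup>2 / (2 * \<sigma>\<^sup>2)) * exp u = exp (- (norm y)\<^sup>2 / (2 * (sqrt 2 * \<sigma>)\<^sup>2))"
    unfolding u_def using assms by (simp add: exp_add[symmetric] power_mult_distrib field_simps)
  ultimately have "gauss_density \<sigma> y * exp u = 2 powr (real DIM('a) / 2) * gauss_density (sqrt 2 * \<sigma>) y"
    unfolding gauss_density_def by (simp add: power_mult_distrib mult.assoc)
  moreover have "(norm y)\<^sup>2 / (2 * \<sigma>\<^sup>2) = 2 * u"
    unfolding u_def using assms by (simp add: field_simps)
  moreover have "gauss_density \<sigma> y * u \<le> gauss_density \<sigma> y * exp u"
    using exp_ge_add_one_self[of u] by (intro mult_left_mono gauss_density_nonneg) linarith
  ultimately show ?thesis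
    by simp
qed

(* equals sum_a |z_a - zbar|^2 for the mean zbar of the z_a *)
definition scatter :: "'a::real_inner^'q::finite \<Rightarrow> real" where
  "scatter z = (\<Sum>a\<in>UNIV. (norm (z $ a))\<^sup>2) - (norm (\<Sum>a\<in>UNIV. z $ a))\<^sup>2 / real CARD('q)"

lemma continuous_on_scatter [continuous_intros]:
  "continuous_on S f \<Longrightarrow> continuous_on S (\<lambda>x. scatter (f x))"
  unfolding scatter_def by (intro continuous_intros) auto

lemma sum_norm_diff_sq_eq:
  fixes x :: "'a::real_inner" and s :: real and z :: "'a^'q::finite"
  defines "m \<equiv> (s / real CARD('q)) *\<^sub>R (\<Sum>a\<in>UNIV. z $ a)"
  shows "(\<Sum>a\<in>UNIV. (norm (x - s *\<^sub>R z $ a))\<^sup>2) = real CARD('q) * (norm (x - m))\<^sup>2 + s\<^sup>2 * scatter z"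
proof -
  define S where "S = (\<Sum>a\<in>UNIV. z $ a)"
  define q where "q = real CARD('q)"
  have "q > 0" unfolding q_def by simp
  have "(\<Sum>a\<in>UNIV. (norm (x - s *\<^sub>R z $ a))\<^sup>2)
      = (\<Sum>a\<in>UNIV. x \<bullet> x - 2 * s * (x \<bullet> z $ a) + s\<^sup>2 * (norm (z $ a))\<^sup>2)"
    by (intro sum.cong refl) (simp add: power2_norm_eq_inner inner_diff_left inner_diff_right
        inner_commute algebra_simps power2_eq_square[of s])
  also have "\<dots> = q * (x \<bullet> x) - 2 * s * (x \<bullet> S) + s\<^sup>2 * (\<Sum>a\<in>UNIV. (norm (z $ a))\<^sup>2)"
    by (simp add: sum.distrib sum_subtractf sum_distrib_left[symmetric] inner_sum_right S_def q_def)
  also have "\<dots> = q * (norm (x - m))\<^sup>2 + s\<^sup>2 * scatter z"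
  proof -
    have "(norm (x - m))\<^sup>2 = x \<bullet> x - 2 * (s / q) * (x \<bullet> S) + (s / q)\<^sup>2 * (norm S)\<^sup>2"
      by (simp add: m_def S_def[symmetric] q_def[symmetric] power2_norm_eq_inner inner_diff_left
          inner_diff_right inner_commute algebra_simps power2_eq_square[of "s / q"])
    then show ?thesis
      using \<open>q > 0\<close> by (simp add: scatter_def S_def[symmetric] q_def[symmetric] field_simps
          power2_eq_square)
  qed
  finally show ?thesis unfolding q_def .
qed

lemma nn_integral_gauss_density_diag:
  fixes z :: "'a::euclidean_space^'q::finite"
  assumes s: "s > 0"
  shows "(\<integral>\<^sup>+x. gauss_density s ((\<chi> a. x) - s *\<^sub>R z) \<partial>lborel) =
    (2 * pi * s\<^sup>2) powr (- real (CARD('q) * DIM('a)) / 2)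
    * (2 * pi * s\<^sup>2 / real CARD('q)) powr (real DIM('a) / 2) * exp (- scatter z / 2)"
proof -
  define q where "q = real CARD('q)"
  define d where "d = real DIM('a)"
  define C where "C = (2 * pi * s\<^sup>2) powr (- (q * d) / 2) * (2 * pi * s\<^sup>2 / q) powr (d / 2) * exp (- scatter z / 2)"
  define m where "m = (s / q) *\<^sub>R (\<Sum>a\<in>UNIV. z $ a)"
  have q: "q > 0" unfolding q_def by simp
  have "gauss_density s ((\<chi> a. x) - s *\<^sub>R z) = C * gauss_density (s / sqrt q) (x - m)" for x
  proof -
    have "(norm ((\<chi> a. x) - s *\<^sub>R z))\<^sup>2 = q * (norm (x - m))\<^sup>2 + s\<^sup>2 * scatter z"
      by (simp add: power2_norm_vec sum_norm_diff_sq_eq m_def q_def)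
    moreover have "- (q * (norm (x - m))\<^sup>2 + s\<^sup>2 * scatter z) / (2 * s\<^sup>2)
        = - scatter z / 2 + - (norm (x - m))\<^sup>2 / (2 * (s\<^sup>2 / q))"
      using q s by (simp add: field_simps)
    ultimately have "gauss_density s ((\<chi> a. x) - s *\<^sub>R z)
        = (2 * pi * s\<^sup>2) powr (- (q * d) / 2) * exp (- scatter z / 2) * exp (- (norm (x - m))\<^sup>2 / (2 * (s\<^sup>2 / q)))"
      by (simp add: gauss_density_def q_def[symmetric] d_def[symmetric] exp_add[symmetric])
    moreover have "gauss_density (s / sqrt q) (x - m)
        = (2 * pi * s\<^sup>2 / q) powr (- d / 2) * exp (- (norm (x - m))\<^sup>2 / (2 * (s\<^sup>2 / q)))"
      using q by (simp add: gauss_density_def d_def power_divide)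
    moreover have "(2 * pi * s\<^sup>2 / q) powr (d / 2) * (2 * pi * s\<^sup>2 / q) powr (- d / 2) = 1"
      using q s by (simp add: powr_add[symmetric])
    ultimately show ?thesis
      by (simp add: C_def)
  qed
  then have "(\<integral>\<^sup>+x. gauss_density s ((\<chi> a. x) - s *\<^sub>R z) \<partial>lborel)
      = C * (\<integral>\<^sup>+x. gauss_density (s / sqrt q) (x - m) \<partial>lborel)"
    by (simp add: C_def ennreal_mult nn_integral_cmult gauss_density_nonneg)
  also have "\<dots> = C"
    using q s by (simp add: nn_integral_gauss_density)
  finally show ?thesis by (simp add: C_def q_def d_def)
qed

definition neg_log_mean_gauss :: "real \<Rightarrow> 'a::real_normed_vector^'q::finite \<Rightarrow> real" where
  "neg_log_mean_gauss c v = - ln (1 / real CARD('q) * (\<Sum>k\<in>UNIV. exp (- c * (norm (v $ k))\<^sup>2)))"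

lemma neg_log_mean_gauss_nonneg:
  assumes "0 \<le> c"
  shows "0 \<le> neg_log_mean_gauss c (v::'a::real_normed_vector^'q::finite)"
proof -
  have "(\<Sum>k\<in>UNIV. exp (- c * (norm (v $ k))\<^sup>2)) \<le> (\<Sum>k\<in>(UNIV::'q set). 1)"
    using assms by (intro sum_mono) auto
  moreover have "0 < (\<Sum>k\<in>UNIV. exp (- c * (norm (v $ k))\<^sup>2))"
    by (intro sum_pos) auto
  ultimately show ?thesis
    by (simp add: neg_log_mean_gauss_def field_simps)
qed

lemma neg_log_mean_gauss_le:
  "neg_log_mean_gauss c (v::'a::real_normed_vector^'q::finite) \<le> ln (real CARD('q)) + c * (norm (v $ j))\<^sup>2"
proof -
  have "exp (- c * (norm (v $ j))\<^sup>2) \<le> (\<Sum>k\<in>UNIV. exp (- c * (norm (v $ k))\<^sup>2))"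
    by (rule member_le_sum) auto
  then have "ln (exp (- c * (norm (v $ j))\<^sup>2) / real CARD('q))
      \<le> ln ((\<Sum>k\<in>UNIV. exp (- c * (norm (v $ k))\<^sup>2)) / real CARD('q))"
    by (intro ln_mono divide_right_mono) auto
  then show ?thesis
    by (simp add: neg_log_mean_gauss_def ln_div)
qed

lemma neg_log_mean_gauss_scaleR:
  "neg_log_mean_gauss c (r *\<^sub>R v) = neg_log_mean_gauss (c * r\<^sup>2) v"
  by (simp add: neg_log_mean_gauss_def power_mult_distrib mult.assoc)

lemma continuous_on_neg_log_mean_gauss [continuous_intros]:
  fixes f :: "'b::topological_space \<Rightarrow> 'a::real_normed_vector^'q::finite"
  assumes "continuous_on S f"
  shows "continuous_on S (\<lambda>x. neg_log_mean_gauss c (f x))"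
proof -
  have "(\<Sum>k\<in>UNIV. exp (- c * (norm (v $ k))\<^sup>2)) \<noteq> 0" for v :: "'a^'q"
    using sum_pos[of UNIV "\<lambda>k. exp (- c * (norm (v $ k))\<^sup>2)"] by simp
  then show ?thesis
    unfolding neg_log_mean_gauss_def by (intro continuous_intros assms) simp
qed

abbreviation mix_surprisal :: "real \<Rightarrow> 'a::real_normed_vector \<Rightarrow> 'a^'q::finite \<Rightarrow> real" where
  "mix_surprisal \<sigma> x w \<equiv> neg_log_mean_gauss (1 / (2 * \<sigma>\<^sup>2)) ((\<chi> a. x) - w)"

lemma mix_density_eq_mean:
  "mix_density \<sigma> x w = 1 / real CARD('q) * (\<Sum>j\<in>UNIV. gauss_density \<sigma> (x - (w::real^'n::finite^'q::finite) $ j))"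
  by (simp add: mix_density_def gauss_density_def sum_distrib_left)

lemma mix_density_nonneg: "0 \<le> mix_density \<sigma> x w"
  by (simp add: mix_density_eq_mean sum_nonneg gauss_density_nonneg)

lemma continuous_on_mix_density [continuous_intros]:
  "continuous_on S f \<Longrightarrow> continuous_on S g \<Longrightarrow> continuous_on S (\<lambda>p. mix_density \<sigma> (f p) (g p))"
  unfolding mix_density_eq_mean by (intro continuous_intros)

lemma ln_mix_density:
  assumes "\<sigma> > 0"
  shows "ln (mix_density \<sigma> x (w::real^'n::finite^'q::finite))
    = - (real CARD('n) / 2) * ln (2 * pi * \<sigma>\<^sup>2) - mix_surprisal \<sigma> x w"
proof -
  define S where "S = 1 / real CARD('q) * (\<Sum>k\<in>UNIV. exp (- (norm (x - w $ k))\<^sup>2 / (2 * \<sigma>\<^sup>2)))"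
  have "0 < S"
    unfolding S_def by (intro mult_pos_pos sum_pos) auto
  moreover have "mix_density \<sigma> x w = (2 * pi * \<sigma>\<^sup>2) powr (- real CARD('n) / 2) * S"
    by (simp add: mix_density_def S_def)
  moreover have "mix_surprisal \<sigma> x w = - ln S"
    by (simp add: neg_log_mean_gauss_def S_def)
  ultimately show ?thesis
    using assms by (simp add: ln_mult ln_powr)
qed

lemma has_bochner_integral_mix_density:
  assumes "\<sigma> > 0"
  shows "has_bochner_integral lborel (\<lambda>x. mix_density \<sigma> x (w::real^'n::finite^'q::finite)) 1"
proof -
  have "has_bochner_integral lborel (\<lambda>x. 1 / real CARD('q) * (\<Sum>j\<in>UNIV. gauss_density \<sigma> (x - w $ j)))
      (1 / real CARD('q) * (\<Sum>j\<in>(UNIV::'q set). 1))"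
    by (intro has_bochner_integral_mult_right has_bochner_integral_sum
        has_bochner_integral_gauss_density assms)
  then show ?thesis
    by (simp add: mix_density_eq_mean)
qed

lemma gauss_density_mult_mix_surprisal_le:
  assumes "\<sigma> > 0"
  shows "gauss_density \<sigma> (x - w $ j) * mix_surprisal \<sigma> x (w::real^'n::finite^'q::finite)
    \<le> ln (real CARD('q)) * gauss_density \<sigma> (x - w $ j)
      + 2 * 2 powr (real CARD('n) / 2) * gauss_density (sqrt 2 * \<sigma>) (x - w $ j)"
proof -
  have "gauss_density \<sigma> (x - w $ j) * mix_surprisal \<sigma> x w
      \<le> gauss_density \<sigma> (x - w $ j) * (ln (real CARD('q)) + (norm (x - w $ j))\<^sup>2 / (2 * \<sigma>\<^sup>2))"
    using neg_log_mean_gauss_le[of "1 / (2 * \<sigma>\<^sup>2)" "(\<chi> a. x) - w" j]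
    by (intro mult_left_mono gauss_density_nonneg) simp_all
  also have "\<dots> \<le> ln (real CARD('q)) * gauss_density \<sigma> (x - w $ j)
      + 2 * 2 powr (real CARD('n) / 2) * gauss_density (sqrt 2 * \<sigma>) (x - w $ j)"
    using gauss_density_mult_norm_sq_le[OF assms, of "x - w $ j"] by (simp add: algebra_simps)
  finally show ?thesis .
qed

lemma mix_density_mult_surprisal_nonneg: "0 \<le> mix_density \<sigma> x w * mix_surprisal \<sigma> x w"
  by (intro mult_nonneg_nonneg mix_density_nonneg neg_log_mean_gauss_nonneg) simp

lemma
  assumes "\<sigma> > 0"
  shows integrable_mix_surprisal:
      "integrable lborel (\<lambda>x. mix_density \<sigma> x (w::real^'n::finite^'q::finite) * mix_surprisal \<sigma> x w)"
    and integral_mix_surprisal_le: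
      "(\<integral>x. mix_density \<sigma> x w * mix_surprisal \<sigma> x w \<partial>lborel)
        \<le> ln (real CARD('q)) + 2 * 2 powr (real CARD('n) / 2)"
proof -
  define C where "C = 2 * 2 powr (real CARD('n) / 2)"
  define g where "g x = 1 / real CARD('q) * (\<Sum>j\<in>UNIV.
      ln (real CARD('q)) * gauss_density \<sigma> (x - w $ j) + C * gauss_density (sqrt 2 * \<sigma>) (x - w $ j))"
    for x
  have g: "has_bochner_integral lborel g (1 / real CARD('q) * (\<Sum>j\<in>(UNIV::'q set). ln (real CARD('q)) * 1 + C * 1))"
    unfolding g_def using assms
    by (intro has_bochner_integral_mult_right has_bochner_integral_sum has_bochner_integral_add
        has_bochner_integral_gauss_density) auto
  have le: "mix_density \<sigma> x w * mix_surprisal \<sigma> x w \<le> g x" for x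
  proof -
    have "mix_density \<sigma> x w * mix_surprisal \<sigma> x w
        = 1 / real CARD('q) * (\<Sum>j\<in>UNIV. gauss_density \<sigma> (x - w $ j) * mix_surprisal \<sigma> x w)"
      by (simp add: mix_density_eq_mean sum_distrib_right)
    also have "\<dots> \<le> g x"
      unfolding g_def C_def
      by (intro mult_left_mono sum_mono gauss_density_mult_mix_surprisal_le assms) simp
    finally show ?thesis .
  qed
  have meas: "(\<lambda>x. mix_density \<sigma> x w * mix_surprisal \<sigma> x w) \<in> borel_measurable lborel"
    unfolding measurable_lborel2 by (intro borel_measurable_continuous_onI continuous_intros)
  have "norm (mix_density \<sigma> x w * mix_surprisal \<sigma> x w) \<le> norm (g x)" for x
    using le[of x] mix_density_mult_surprisal_nonneg[of \<sigma> x w]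
    by (metis abs_of_nonneg order_trans real_norm_def)
  then show int: "integrable lborel (\<lambda>x. mix_density \<sigma> x w * mix_surprisal \<sigma> x w)"
    by (intro Bochner_Integration.integrable_bound[OF integrable.intros[OF g] meas] AE_I2)
  have "(\<integral>x. mix_density \<sigma> x w * mix_surprisal \<sigma> x w \<partial>lborel) \<le> (\<integral>x. g x \<partial>lborel)"
    by (rule integral_mono[OF int integrable.intros[OF g] le])
  then show "(\<integral>x. mix_density \<sigma> x w * mix_surprisal \<sigma> x w \<partial>lborel) \<le> ln (real CARD('q)) + C"
    using g by (simp add: has_bochner_integral_integral_eq)
qed

lemma borel_measurable_lborel_pair_continuous:
  fixes f :: "'a::euclidean_space \<Rightarrow> 'b::euclidean_space \<Rightarrow> real"
  assumes "continuous_on UNIV (\<lambda>p. f (fst p) (snd p))"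
  shows "(\<lambda>(x, y). ennreal (f x y)) \<in> borel_measurable (lborel \<Otimes>\<^sub>M lborel)"
  unfolding lborel_prod case_prod_unfold measurable_lborel2
  by (intro measurable_compose[OF _ measurable_ennreal] borel_measurable_continuous_onI assms)

lemma gauss_constants_eq:
  fixes s \<sigma> \<mu> q :: real and Q N :: nat
  assumes s: "s > 0" and \<sigma>: "\<sigma> > 0" and \<mu>: "\<mu> = s\<^sup>2 / \<sigma>\<^sup>2" and q: "q > 0"
  shows "s ^ (Q * N) * (2 * pi * s\<^sup>2) powr (- real (Q * N) / 2) * (2 * pi * s\<^sup>2 / q) powr (real N / 2)
         * (2 * pi * \<sigma>\<^sup>2) powr (- real N / 2)
       = (\<mu> / q) powr (real N / 2) * (2 * pi) powr (- real (Q * N) / 2)"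
proof -
  define k where "k = real (Q * N) / 2"
  have "(s\<^sup>2) powr k = s ^ (Q * N)"
  proof -
    have "(s\<^sup>2) powr k = (s powr 2) powr k"
      using s by (simp add: powr_numeral)
    also have "\<dots> = s powr (real (Q * N))"
      by (simp add: powr_powr k_def)
    also have "\<dots> = s ^ (Q * N)"
      using s by (simp only: powr_realpow)
    finally show ?thesis .
  qed
  moreover have "(2 * pi * s\<^sup>2) powr (- k) = (2 * pi) powr (- k) * (s\<^sup>2) powr (- k)"
    by (rule powr_mult)
  moreover have "(s\<^sup>2) powr k * (s\<^sup>2) powr (- k) = 1"
    using s by (simp add: powr_add[symmetric])
  moreover have "(2 * pi * s\<^sup>2 / q) powr (real N / 2) * (2 * pi * \<sigma>\<^sup>2) powr (- real N / 2)
      = (\<mu> / q) powr (real N / 2)"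
  proof -
    have "(2 * pi * s\<^sup>2 / q) / (2 * pi * \<sigma>\<^sup>2) = \<mu> / q"
      using \<sigma> \<mu> q by (simp add: field_simps)
    then show ?thesis
      using s \<sigma> q by (simp add: powr_minus_divide powr_divide[symmetric])
  qed
  ultimately show ?thesis
    by (simp add: k_def mult_ac)
qed

lemma nn_integral_mix_component_rescale:
  fixes x :: "real^'n::finite" and j :: "'q::finite"
  assumes s: "s > 0" and \<sigma>: "\<sigma> > 0" and \<mu>: "\<mu> = s\<^sup>2 / \<sigma>\<^sup>2"
  shows "(\<integral>\<^sup>+w. gauss_density s (w::real^'n^'q) * gauss_density \<sigma> (x - w $ j) * mix_surprisal \<sigma> x w \<partial>lborel)
    = (\<integral>\<^sup>+z. s ^ (CARD('q) * CARD('n)) * gauss_density s ((\<chi> a. x) - s *\<^sub>R z)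
        * gauss_density \<sigma> (s *\<^sub>R z $ j) * neg_log_mean_gauss (\<mu> / 2) z \<partial>lborel)"
proof -
  have "neg_log_mean_gauss (1 / (2 * \<sigma>\<^sup>2)) (s *\<^sub>R z) = neg_log_mean_gauss (\<mu> / 2) z" for z :: "real^'n^'q"
    using \<sigma> by (simp add: neg_log_mean_gauss_scaleR \<mu> field_simps)
  moreover have "(\<lambda>w. ennreal (gauss_density s w * gauss_density \<sigma> (x - w $ j) * mix_surprisal \<sigma> x w))
      \<in> borel_measurable borel"
    by (intro measurable_compose[OF _ measurable_ennreal] borel_measurable_continuous_onI continuous_intros)
  ultimately show ?thesis
    using s by (subst nn_integral_lborel_affine[where c = "- s" and t = "\<chi> a. x"])
      (auto intro!: nn_integral_cong simp: ennreal_mult'[symmetric] mult_ac)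
qed

lemma nn_integral_mix_component_diag:
  fixes z :: "real^'n::finite^'q::finite"
  assumes s: "s > 0" and \<sigma>: "\<sigma> > 0" and \<mu>: "\<mu> = s\<^sup>2 / \<sigma>\<^sup>2"
  shows "(\<integral>\<^sup>+x. s ^ (CARD('q) * CARD('n)) * gauss_density s ((\<chi> a. x) - s *\<^sub>R z)
        * gauss_density \<sigma> (s *\<^sub>R z $ j) * neg_log_mean_gauss (\<mu> / 2) z \<partial>lborel)
    = (\<mu> / real CARD('q)) powr (real CARD('n) / 2) * (2 * pi) powr (- real (CARD('q) * CARD('n)) / 2)
      * (exp (- scatter z / 2 - \<mu> / 2 * (norm (z $ j))\<^sup>2) * neg_log_mean_gauss (\<mu> / 2) z)"
proof -
  define J where "J = s ^ (CARD('q) * CARD('n))"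
  define S where "S = (2 * pi * s\<^sup>2) powr (- real (CARD('q) * CARD('n)) / 2)
      * (2 * pi * s\<^sup>2 / real CARD('q)) powr (real CARD('n) / 2)"
  define P where "P = (2 * pi * \<sigma>\<^sup>2) powr (- real CARD('n) / 2)"
  define H where "H = neg_log_mean_gauss (\<mu> / 2) z"
  have "H \<ge> 0"
    using \<mu> by (simp add: H_def neg_log_mean_gauss_nonneg)
  have "gauss_density \<sigma> (s *\<^sub>R z $ j) = P * exp (- \<mu> / 2 * (norm (z $ j))\<^sup>2)"
    using \<sigma> by (simp add: gauss_density_def P_def \<mu> power_mult_distrib)
  then have "(\<integral>\<^sup>+x. J * gauss_density s ((\<chi> a. x) - s *\<^sub>R z)
        * gauss_density \<sigma> (s *\<^sub>R z $ j) * H \<partial>lborel)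
      = ennreal (J * P * exp (- \<mu> / 2 * (norm (z $ j))\<^sup>2) * H)
        * (\<integral>\<^sup>+x. gauss_density s ((\<chi> a. x) - s *\<^sub>R z) \<partial>lborel)"
    using s \<open>H \<ge> 0\<close>
    by (subst nn_integral_cmult[symmetric])
      (auto intro!: nn_integral_cong measurable_compose[OF _ measurable_ennreal]
        borel_measurable_continuous_onI continuous_intros
        simp: J_def P_def ennreal_mult[symmetric] gauss_density_nonneg mult_ac)
  also have "\<dots> = ennreal ((J * S * P) * (exp (- scatter z / 2) * exp (- \<mu> / 2 * (norm (z $ j))\<^sup>2) * H))"
    using s \<open>H \<ge> 0\<close>
    by (simp add: nn_integral_gauss_density_diag S_def J_def P_def ennreal_mult[symmetric] mult_ac)
  also have "J * S * P = (\<mu> / real CARD('q)) powr (real CARD('n) / 2)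
      * (2 * pi) powr (- real (CARD('q) * CARD('n)) / 2)"
    using gauss_constants_eq[OF s \<sigma> \<mu>, of "real CARD('q)" "CARD('q)" "CARD('n)"]
    by (simp add: J_def S_def P_def mult.assoc)
  also have "exp (- scatter z / 2) * exp (- \<mu> / 2 * (norm (z $ j))\<^sup>2)
      = exp (- scatter z / 2 - \<mu> / 2 * (norm (z $ j))\<^sup>2)"
    by (simp add: exp_add[symmetric])
  finally show ?thesis
    by (simp add: J_def H_def)
qed

lemma nn_integral_gauss_mix_component:
  fixes j :: "'q::finite"
  assumes s: "s > 0" and \<sigma>: "\<sigma> > 0" and \<mu>: "\<mu> = s\<^sup>2 / \<sigma>\<^sup>2"
  shows "(\<integral>\<^sup>+w. \<integral>\<^sup>+x. gauss_density s (w::real^'n::finite^'q) * gauss_density \<sigma> (x - w $ j)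
            * mix_surprisal \<sigma> x w \<partial>lborel \<partial>lborel)
    = (\<mu> / real CARD('q)) powr (real CARD('n) / 2) * (2 * pi) powr (- real (CARD('q) * CARD('n)) / 2)
      * (\<integral>\<^sup>+z. exp (- scatter z / 2 - \<mu> / 2 * (norm (z $ j))\<^sup>2)
          * neg_log_mean_gauss (\<mu> / 2) (z::real^'n^'q) \<partial>lborel)"
proof -
  define K where "K = (\<mu> / real CARD('q)) powr (real CARD('n) / 2)
    * (2 * pi) powr (- real (CARD('q) * CARD('n)) / 2)"
  have "(\<integral>\<^sup>+w. \<integral>\<^sup>+x. gauss_density s (w::real^'n^'q) * gauss_density \<sigma> (x - w $ j)
        * mix_surprisal \<sigma> x w \<partial>lborel \<partial>lborel)
      = (\<integral>\<^sup>+x. \<integral>\<^sup>+w. gauss_density s (w::real^'n^'q) * gauss_density \<sigma> (x - w $ j)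
        * mix_surprisal \<sigma> x w \<partial>lborel \<partial>lborel)"
    by (rule lborel_pair.Fubini', rule borel_measurable_lborel_pair_continuous) (intro continuous_intros)
  also have "\<dots> = (\<integral>\<^sup>+x. \<integral>\<^sup>+z. s ^ (CARD('q) * CARD('n)) * gauss_density s ((\<chi> a. x) - s *\<^sub>R z)
      * gauss_density \<sigma> (s *\<^sub>R z $ j) * neg_log_mean_gauss (\<mu> / 2) (z::real^'n^'q) \<partial>lborel \<partial>lborel)"
    by (simp add: nn_integral_mix_component_rescale[OF s \<sigma> \<mu>])
  also have "\<dots> = (\<integral>\<^sup>+z. \<integral>\<^sup>+x. s ^ (CARD('q) * CARD('n)) * gauss_density s ((\<chi> a. x) - s *\<^sub>R z)
      * gauss_density \<sigma> (s *\<^sub>R z $ j) * neg_log_mean_gauss (\<mu> / 2) (z::real^'n^'q) \<partial>lborel \<partial>lborel)"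
    by (rule lborel_pair.Fubini'[symmetric], rule borel_measurable_lborel_pair_continuous)
      (intro continuous_intros)
  also have "\<dots> = (\<integral>\<^sup>+z. K * (exp (- scatter z / 2 - \<mu> / 2 * (norm (z $ j))\<^sup>2)
      * neg_log_mean_gauss (\<mu> / 2) (z::real^'n^'q)) \<partial>lborel)"
    by (simp add: nn_integral_mix_component_diag[OF s \<sigma> \<mu>] K_def)
  also have "\<dots> = K * (\<integral>\<^sup>+z. exp (- scatter z / 2 - \<mu> / 2 * (norm (z $ j))\<^sup>2)
      * neg_log_mean_gauss (\<mu> / 2) (z::real^'n^'q) \<partial>lborel)"
  proof -
    have "(\<lambda>z. ennreal (exp (- scatter z / 2 - \<mu> / 2 * (norm (z $ j))\<^sup>2)
        * neg_log_mean_gauss (\<mu> / 2) (z::real^'n^'q))) \<in> borel_measurable lborel"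
      unfolding measurable_lborel2
      by (intro measurable_compose[OF _ measurable_ennreal] borel_measurable_continuous_onI
          continuous_intros) simp
    moreover have "\<mu> \<ge> 0"
      using \<mu> by simp
    ultimately show ?thesis
      by (simp add: K_def nn_integral_cmult[symmetric] ennreal_mult neg_log_mean_gauss_nonneg)
  qed
  finally show ?thesis
    by (simp add: K_def)
qed

lemma integral_mix_density_ln:
  assumes "\<sigma> > 0"
  shows "(\<integral>x. mix_density \<sigma> x w * ln (mix_density \<sigma> x w) \<partial>lborel)
    = - (real CARD('n) / 2) * ln (2 * pi * \<sigma>\<^sup>2)
      - (\<integral>x. mix_density \<sigma> x (w::real^'n::finite^'q::finite) * mix_surprisal \<sigma> x w \<partial>lborel)"
proof -
  have "(\<integral>x. mix_density \<sigma> x w * ln (mix_density \<sigma> x w) \<partial>lborel)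
      = (\<integral>x. - (real CARD('n) / 2) * ln (2 * pi * \<sigma>\<^sup>2) * mix_density \<sigma> x w
             - mix_density \<sigma> x w * mix_surprisal \<sigma> x w \<partial>lborel)"
    using assms by (simp add: ln_mix_density algebra_simps)
  also have "\<dots> = - (real CARD('n) / 2) * ln (2 * pi * \<sigma>\<^sup>2)
      - (\<integral>x. mix_density \<sigma> x w * mix_surprisal \<sigma> x w \<partial>lborel)"
    using has_bochner_integral_mix_density[OF assms, of w] integrable_mix_surprisal[OF assms, of w]
    by (simp add: has_bochner_integral_iff)
  finally show ?thesis .
qed

lemma nn_integral_gauss_mix_surprisal_eq_mean:
  "(\<integral>\<^sup>+w. \<integral>\<^sup>+x. gauss_density s (w::real^'n::finite^'q::finite)
      * (mix_density \<sigma> x w * mix_surprisal \<sigma> x w) \<partial>lborel \<partial>lborel)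
    = ennreal (1 / real CARD('q)) * (\<Sum>j\<in>UNIV. \<integral>\<^sup>+w. \<integral>\<^sup>+x. gauss_density s (w::real^'n^'q)
      * gauss_density \<sigma> (x - w $ j) * mix_surprisal \<sigma> x w \<partial>lborel \<partial>lborel)"
proof -
  define F where "F j x w = gauss_density s w * gauss_density \<sigma> (x - w $ j) * mix_surprisal \<sigma> x w"
    for j and x :: "real^'n" and w :: "real^'n^'q"
  have F_nonneg: "0 \<le> F j x w" for j x w
    unfolding F_def by (intro mult_nonneg_nonneg gauss_density_nonneg neg_log_mean_gauss_nonneg) simp
  have F_meas_x: "(\<lambda>x. ennreal (F j x w)) \<in> borel_measurable lborel" for j w
    unfolding F_def measurable_lborel2
    by (intro measurable_compose[OF _ measurable_ennreal] borel_measurable_continuous_onI continuous_intros)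
  have F_meas_w: "(\<lambda>w. \<integral>\<^sup>+x. F j x w \<partial>lborel) \<in> borel_measurable lborel" for j
    unfolding F_def
    by (intro lborel.borel_measurable_nn_integral borel_measurable_lborel_pair_continuous continuous_intros)
  have "ennreal (gauss_density s w * (mix_density \<sigma> x w * mix_surprisal \<sigma> x w))
      = ennreal (1 / real CARD('q)) * (\<Sum>j\<in>UNIV. ennreal (F j x w))" for x w
    using F_nonneg
    by (simp add: F_def mix_density_eq_mean sum_distrib_left sum_distrib_right ennreal_mult'[symmetric]
        sum_ennreal mult_ac)
  moreover have "(\<integral>\<^sup>+x. ennreal (1 / real CARD('q)) * (\<Sum>j\<in>UNIV. ennreal (F j x w)) \<partial>lborel)
      = ennreal (1 / real CARD('q)) * (\<Sum>j\<in>UNIV. \<integral>\<^sup>+x. F j x w \<partial>lborel)" for w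
    by (simp add: nn_integral_cmult[OF borel_measurable_sum[OF F_meas_x]] nn_integral_sum[OF F_meas_x])
  ultimately show ?thesis
    unfolding F_def[symmetric]
    by (simp add: nn_integral_cmult[OF borel_measurable_sum[OF F_meas_w]] nn_integral_sum[OF F_meas_w])
qed

lemma borel_measurable_integral_mix_surprisal:
  "(\<lambda>w. \<integral>x. mix_density \<sigma> x (w::real^'n::finite^'q::finite) * mix_surprisal \<sigma> x w \<partial>lborel)
    \<in> borel_measurable lborel"
  unfolding lborel_prod[symmetric]
  by (intro lborel.borel_measurable_lebesgue_integral)
    (simp add: lborel_prod case_prod_unfold borel_measurable_continuous_onI continuous_intros)

lemma nn_integral_gauss_mult_integral_mix_surprisal:
  assumes "\<sigma> > 0"
  shows "(\<integral>\<^sup>+w. gauss_density s w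
        * (\<integral>x. mix_density \<sigma> x (w::real^'n::finite^'q::finite) * mix_surprisal \<sigma> x w \<partial>lborel) \<partial>lborel)
    = (\<integral>\<^sup>+w. \<integral>\<^sup>+x. gauss_density s (w::real^'n^'q)
        * (mix_density \<sigma> x w * mix_surprisal \<sigma> x w) \<partial>lborel \<partial>lborel)"
proof (rule nn_integral_cong)
  fix w :: "real^'n^'q"
  have "(\<integral>\<^sup>+x. gauss_density s w * (mix_density \<sigma> x w * mix_surprisal \<sigma> x w) \<partial>lborel)
      = ennreal (\<integral>x. gauss_density s w * (mix_density \<sigma> x w * mix_surprisal \<sigma> x w) \<partial>lborel)"
    using integrable_mix_surprisal[OF assms, of w]
    by (intro nn_integral_eq_integral integrable_mult_right AE_I2 mult_nonneg_nonneg
        gauss_density_nonneg mix_density_mult_surprisal_nonneg)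
  then show "ennreal (gauss_density s w * (\<integral>x. mix_density \<sigma> x w * mix_surprisal \<sigma> x w \<partial>lborel))
      = (\<integral>\<^sup>+x. gauss_density s w * (mix_density \<sigma> x w * mix_surprisal \<sigma> x w) \<partial>lborel)"
    by simp
qed

lemma nn_integral_gauss_mult_integral_mix_surprisal_le:
  assumes s: "s > 0" and \<sigma>: "\<sigma> > 0"
  shows "(\<integral>\<^sup>+w. gauss_density s w
        * (\<integral>x. mix_density \<sigma> x (w::real^'n::finite^'q::finite) * mix_surprisal \<sigma> x w \<partial>lborel) \<partial>lborel)
    \<le> ln (real CARD('q)) + 2 * 2 powr (real CARD('n) / 2)"
proof -
  define B where "B = ln (real CARD('q)) + 2 * 2 powr (real CARD('n) / 2)"
  have "B \<ge> 0"
    by (simp add: B_def)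
  have "(\<integral>\<^sup>+w. gauss_density s (w::real^'n^'q)
        * (\<integral>x. mix_density \<sigma> x w * mix_surprisal \<sigma> x w \<partial>lborel) \<partial>lborel)
      \<le> (\<integral>\<^sup>+w. gauss_density s (w::real^'n^'q) * B \<partial>lborel)"
    using integral_mix_surprisal_le[OF \<sigma>]
    by (intro nn_integral_mono ennreal_leI mult_left_mono gauss_density_nonneg) (simp add: B_def)
  also have "\<dots> = B"
    using nn_integral_gauss_density[OF s, of "0::real^'n^'q"] \<open>B \<ge> 0\<close>
    by (simp add: ennreal_mult gauss_density_nonneg nn_integral_multc)
  finally show ?thesis
    by (simp add: B_def)
qed

lemma integrable_gauss_mix_surprisal:
  assumes s: "s > 0" and \<sigma>: "\<sigma> > 0"
  shows "integrable lborel (\<lambda>w. gauss_density s w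
      * (\<integral>x. mix_density \<sigma> x (w::real^'n::finite^'q::finite) * mix_surprisal \<sigma> x w \<partial>lborel))"
proof (rule integrableI_nonneg)
  show "(\<lambda>w. gauss_density s w * (\<integral>x. mix_density \<sigma> x w * mix_surprisal \<sigma> x w \<partial>lborel))
      \<in> borel_measurable lborel"
    using borel_measurable_integral_mix_surprisal[of \<sigma>] by measurable
  show "AE w in lborel. 0 \<le> gauss_density s w * (\<integral>x. mix_density \<sigma> x w * mix_surprisal \<sigma> x w \<partial>lborel)"
    by (intro AE_I2 mult_nonneg_nonneg gauss_density_nonneg integral_nonneg_AE
        mix_density_mult_surprisal_nonneg)
  show "(\<integral>\<^sup>+w. gauss_density s w
      * (\<integral>x. mix_density \<sigma> x w * mix_surprisal \<sigma> x w \<partial>lborel) \<partial>lborel) < \<infinity>"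
    by (rule le_less_trans[OF nn_integral_gauss_mult_integral_mix_surprisal_le[OF s \<sigma>]]) simp
qed

lemma nn_integral_gauss_mix_surprisal:
  assumes s: "s > 0" and \<sigma>: "\<sigma> > 0" and \<mu>: "\<mu> = s\<^sup>2 / \<sigma>\<^sup>2"
  shows "(\<integral>\<^sup>+w. gauss_density s w
        * (\<integral>x. mix_density \<sigma> x (w::real^'n::finite^'q::finite) * mix_surprisal \<sigma> x w \<partial>lborel) \<partial>lborel)
    = ennreal ((\<mu> / real CARD('q)) powr (real CARD('n) / 2)
        * (2 * pi) powr (- real (CARD('q) * CARD('n)) / 2) / real CARD('q))
      * (\<Sum>j\<in>UNIV. \<integral>\<^sup>+z. exp (- scatter z / 2 - \<mu> / 2 * (norm (z $ j))\<^sup>2)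
          * neg_log_mean_gauss (\<mu> / 2) (z::real^'n^'q) \<partial>lborel)"
proof -
  have "(\<integral>\<^sup>+w. gauss_density s w
        * (\<integral>x. mix_density \<sigma> x (w::real^'n^'q) * mix_surprisal \<sigma> x w \<partial>lborel) \<partial>lborel)
      = (\<integral>\<^sup>+w. \<integral>\<^sup>+x. gauss_density s (w::real^'n^'q)
        * (mix_density \<sigma> x w * mix_surprisal \<sigma> x w) \<partial>lborel \<partial>lborel)"
    by (rule nn_integral_gauss_mult_integral_mix_surprisal[OF \<sigma>])
  also have "\<dots> = ennreal (1 / real CARD('q)) * (\<Sum>j\<in>UNIV. \<integral>\<^sup>+w. \<integral>\<^sup>+x. gauss_density s (w::real^'n^'q)
        * gauss_density \<sigma> (x - w $ j) * mix_surprisal \<sigma> x w \<partial>lborel \<partial>lborel)"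
    by (rule nn_integral_gauss_mix_surprisal_eq_mean)
  also have "\<dots> = ennreal (1 / real CARD('q)) * (\<Sum>j\<in>UNIV. ennreal ((\<mu> / real CARD('q)) powr (real CARD('n) / 2)
        * (2 * pi) powr (- real (CARD('q) * CARD('n)) / 2))
      * (\<integral>\<^sup>+z. exp (- scatter z / 2 - \<mu> / 2 * (norm (z $ j))\<^sup>2)
          * neg_log_mean_gauss (\<mu> / 2) (z::real^'n^'q) \<partial>lborel))"
    by (simp add: nn_integral_gauss_mix_component[OF s \<sigma> \<mu>])
  finally show ?thesis
    by (simp add: sum_distrib_left mult.assoc[symmetric] ennreal_mult[symmetric])
qed

lemma integrable_scatter_weight:
  assumes s: "s > 0" and \<sigma>: "\<sigma> > 0" and \<mu>: "\<mu> = s\<^sup>2 / \<sigma>\<^sup>2"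
  shows "integrable lborel (\<lambda>z. exp (- scatter z / 2 - \<mu> / 2 * (norm (z $ j))\<^sup>2)
      * neg_log_mean_gauss (\<mu> / 2) (z::real^'n::finite^'q::finite))"
proof (rule integrableI_nonneg)
  let ?V = "\<lambda>j z. exp (- scatter z / 2 - \<mu> / 2 * (norm (z $ j))\<^sup>2) * neg_log_mean_gauss (\<mu> / 2) (z::real^'n^'q)"
  have "(\<integral>\<^sup>+w. gauss_density s w
      * (\<integral>x. mix_density \<sigma> x (w::real^'n^'q) * mix_surprisal \<sigma> x w \<partial>lborel) \<partial>lborel) < \<infinity>"
    by (rule le_less_trans[OF nn_integral_gauss_mult_integral_mix_surprisal_le[OF s \<sigma>]]) simp
  then show "(\<integral>\<^sup>+z. ?V j z \<partial>lborel) < \<infinity>"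
    using s \<sigma> \<mu> by (auto simp: nn_integral_gauss_mix_surprisal[OF s \<sigma> \<mu>] ennreal_mult_less_top less_top)
  show "?V j \<in> borel_measurable lborel"
    unfolding measurable_lborel2 by (intro borel_measurable_continuous_onI continuous_intros) simp
  show "AE z in lborel. 0 \<le> ?V j z"
    using \<mu> by (simp add: neg_log_mean_gauss_nonneg)
qed

lemma integral_gauss_mix_surprisal:
  assumes s: "s > 0" and \<sigma>: "\<sigma> > 0" and \<mu>: "\<mu> = s\<^sup>2 / \<sigma>\<^sup>2"
  shows "(\<integral>w. gauss_density s w
        * (\<integral>x. mix_density \<sigma> x (w::real^'n::finite^'q::finite) * mix_surprisal \<sigma> x w \<partial>lborel) \<partial>lborel)
      = (\<mu> / real CARD('q)) powr (real CARD('n) / 2)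
          * (2 * pi) powr (- real (CARD('q) * CARD('n)) / 2) / real CARD('q)
        * (\<Sum>j\<in>UNIV. \<integral>z. exp (- scatter z / 2 - \<mu> / 2 * (norm (z $ j))\<^sup>2)
            * neg_log_mean_gauss (\<mu> / 2) (z::real^'n^'q) \<partial>lborel)"
proof -
  define M where "M w = (\<integral>x. mix_density \<sigma> x w * mix_surprisal \<sigma> x w \<partial>lborel)" for w :: "real^'n^'q"
  define V where "V j z = exp (- scatter z / 2 - \<mu> / 2 * (norm (z $ j))\<^sup>2) * neg_log_mean_gauss (\<mu> / 2) z"
    for j and z :: "real^'n^'q"
  define K where "K = (\<mu> / real CARD('q)) powr (real CARD('n) / 2)
    * (2 * pi) powr (- real (CARD('q) * CARD('n)) / 2) / real CARD('q)"
  have "(\<integral>w. gauss_density s w * M w \<partial>lborel) = enn2real (\<integral>\<^sup>+w. gauss_density s w * M w \<partial>lborel)"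
  proof (rule integral_eq_nn_integral)
    have "M \<in> borel_measurable lborel"
      unfolding M_def by (rule borel_measurable_integral_mix_surprisal)
    then show "(\<lambda>w. gauss_density s w * M w) \<in> borel_measurable lborel"
      by measurable
    show "AE w in lborel. 0 \<le> gauss_density s w * M w"
      unfolding M_def by (intro AE_I2 mult_nonneg_nonneg gauss_density_nonneg integral_nonneg_AE
          mix_density_mult_surprisal_nonneg)
  qed
  also have "\<dots> = enn2real (ennreal K * (\<Sum>j\<in>UNIV. \<integral>\<^sup>+z. V j z \<partial>lborel))"
    unfolding M_def K_def V_def by (simp only: nn_integral_gauss_mix_surprisal[OF s \<sigma> \<mu>])
  also have "\<dots> = K * (\<Sum>j\<in>UNIV. \<integral>z. V j z \<partial>lborel)"
  proof -
    have "integrable lborel (V j)" for j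
      unfolding V_def by (rule integrable_scatter_weight[OF s \<sigma> \<mu>])
    moreover have "0 \<le> V j z" for j z
      using \<mu> by (simp add: V_def neg_log_mean_gauss_nonneg)
    moreover have "K > 0"
      using s \<sigma> \<mu> by (simp add: K_def)
    ultimately show ?thesis
      by (simp add: nn_integral_eq_integral sum_ennreal integral_nonneg_AE ennreal_mult''[symmetric]
          sum_nonneg)
  qed
  finally show ?thesis
    by (simp add: M_def K_def V_def)
qed

lemma exp_mult_ln_mean_exp_eq:
  fixes z :: "real^'n::finite^'q::finite"
  shows "exp (- 1/2 * (\<Sum>a\<in>UNIV. (norm (z $ a))\<^sup>2) + 1 / (2 * real CARD('q)) * (norm (\<Sum>a\<in>UNIV. z $ a))\<^sup>2
        - \<mu> / 2 * (norm (z $ j))\<^sup>2) * ln (1 / real CARD('q) * (\<Sum>k\<in>UNIV. exp (- \<mu> / 2 * (norm (z $ k))\<^sup>2)))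
    = - (exp (- scatter z / 2 - \<mu> / 2 * (norm (z $ j))\<^sup>2) * neg_log_mean_gauss (\<mu> / 2) z)"
proof -
  have "- 1/2 * (\<Sum>a\<in>UNIV. (norm (z $ a))\<^sup>2) + 1 / (2 * real CARD('q)) * (norm (\<Sum>a\<in>UNIV. z $ a))\<^sup>2
      - \<mu> / 2 * (norm (z $ j))\<^sup>2 = - scatter z / 2 - \<mu> / 2 * (norm (z $ j))\<^sup>2"
    by (simp add: scatter_def field_simps)
  then show ?thesis
    by (simp add: neg_log_mean_gauss_def)
qed

lemma mean_mix_entropy_eq:
  assumes s: "s > 0" and \<sigma>: "\<sigma> > 0"
  shows "- (\<integral>w. W_density s (w :: real^'n::finite^'q::finite) *
              (\<integral>x. mix_density \<sigma> x w * ln (mix_density \<sigma> x w) \<partial>lborel) \<partial>lborel)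
    = real CARD('n) / 2 * ln (2 * pi * \<sigma>\<^sup>2)
      + (\<integral>w. gauss_density s (w::real^'n^'q)
          * (\<integral>x. mix_density \<sigma> x w * mix_surprisal \<sigma> x w \<partial>lborel) \<partial>lborel)"
proof -
  define c where "c = real CARD('n) / 2 * ln (2 * pi * \<sigma>\<^sup>2)"
  define M where "M w = (\<integral>x. mix_density \<sigma> x w * mix_surprisal \<sigma> x w \<partial>lborel)" for w :: "real^'n^'q"
  have "- (\<integral>w. W_density s (w :: real^'n^'q)
        * (\<integral>x. mix_density \<sigma> x w * ln (mix_density \<sigma> x w) \<partial>lborel) \<partial>lborel)
      = (\<integral>w. c * gauss_density s (w :: real^'n^'q) + gauss_density s w * M w \<partial>lborel)"
    using s by (simp add: W_density_eq_gauss_density integral_mix_density_ln[OF \<sigma>] M_def c_def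
        algebra_simps flip: Bochner_Integration.integral_minus)
  also have "\<dots> = c + (\<integral>w. gauss_density s w * M w \<partial>lborel)"
  proof -
    have "integrable lborel (\<lambda>w::real^'n^'q. gauss_density s w)"
      and "(\<integral>w. gauss_density s (w :: real^'n^'q) \<partial>lborel) = 1"
      using has_bochner_integral_gauss_density[OF s, of "0::real^'n^'q"]
      by (simp_all add: has_bochner_integral_iff)
    then show ?thesis
      unfolding M_def
      by (simp add: Bochner_Integration.integral_add[OF integrable_mult_right
            integrable_gauss_mix_surprisal[OF s \<sigma>]])
  qed
  finally show ?thesis
    by (simp add: c_def M_def)
qed

theorem lemma1:
  fixes \<sigma> s \<mu> :: real
  assumes "\<sigma> > 0" and "s > 0" and "\<mu> = s\<^sup>2 / \<sigma>\<^sup>2"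
  shows "- (\<integral>w. W_density s (w :: real^'n::finite^'q::finite) *
              (\<integral>x. mix_density \<sigma> x w * ln (mix_density \<sigma> x w) \<partial>lborel) \<partial>lborel)
    = real CARD('n) / 2 * ln (2 * pi * \<sigma>\<^sup>2)
      - (\<mu> / real CARD('q)) powr (real CARD('n) / 2)
        * (2 * pi) powr (- (real CARD('q) * real CARD('n)) / 2)
        * (1 / real CARD('q))
        * (\<Sum>j\<in>UNIV. \<integral>z.
             exp (- 1/2 * (\<Sum>a\<in>UNIV. (norm ((z :: real^'n^'q) $ a))\<^sup>2)
                  + 1 / (2 * real CARD('q)) * (norm (\<Sum>a\<in>UNIV. z $ a))\<^sup>2
                  - \<mu> / 2 * (norm (z $ j))\<^sup>2)
             * ln (1 / real CARD('q) * (\<Sum>k\<in>UNIV. exp (- \<mu> / 2 * (norm (z $ k))\<^sup>2))) \<partial>lborel)"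
proof -
  note \<sigma> = assms(1) and s = assms(2) and \<mu> = assms(3)
  have "- (\<integral>w. W_density s (w :: real^'n^'q)
        * (\<integral>x. mix_density \<sigma> x w * ln (mix_density \<sigma> x w) \<partial>lborel) \<partial>lborel)
      = real CARD('n) / 2 * ln (2 * pi * \<sigma>\<^sup>2)
        + (\<integral>w. gauss_density s (w :: real^'n^'q)
            * (\<integral>x. mix_density \<sigma> x w * mix_surprisal \<sigma> x w \<partial>lborel) \<partial>lborel)"
    by (rule mean_mix_entropy_eq[OF s \<sigma>])
  also have "(\<integral>w. gauss_density s (w :: real^'n^'q)
        * (\<integral>x. mix_density \<sigma> x w * mix_surprisal \<sigma> x w \<partial>lborel) \<partial>lborel)
      = (\<mu> / real CARD('q)) powr (real CARD('n) / 2) * (2 * pi) powr (- real (CARD('q) * CARD('n)) / 2)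
        / real CARD('q) * (\<Sum>j\<in>UNIV. \<integral>z. exp (- scatter z / 2 - \<mu> / 2 * (norm (z $ j))\<^sup>2)
          * neg_log_mean_gauss (\<mu> / 2) (z::real^'n^'q) \<partial>lborel)"
    by (rule integral_gauss_mix_surprisal[OF s \<sigma> \<mu>])
  finally show ?thesis
    unfolding exp_mult_ln_mean_exp_eq Bochner_Integration.integral_minus sum_negf by simp
qed

end
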